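(* Let $k\ge1$, let $A,B$ be disjoint $n$-element sets, and let $\mathcal S$ be a semi-intersecting family with parameters $n$ and $k$ on base sets $A,B$. If $|\mathcal S|>2k^3$, then either every element of $A$ has degree at most $k$ in $\mathcal S$, or every element of $B$ has degree at most $k$ in $\mathcal S$.
   Context: A semi-intersecting family with parameters $n,k$ on disjoint $n$-element base sets $A,B$ is a family $\mathcal S$ of subsets of $A\cup B$ with $|S\cap A|=|S\cap B|=k$ for every $S\in\mathcal S$, such that any two distinct $S,T\in\mathcal S$ satisfy exactly one of $S\cap T\cap A=\emptyset$, $S\cap T\cap B=\emptyset$. The degree of a vertex $v$ in $\mathcal S$ is the number of members of $\mathcal S$ containing $v$. *)

theory Defs
  imports Main
begin

definition semi_intersecting ::
  "nat \<Rightarrow> nat \<Rightarrow> 'a set \<Rightarrow> 'a set \<Rightarrow> 'a set set \<Rightarrow> bool" where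
  "semi_intersecting n k A B \<S> \<longleftrightarrow>
     finite A \<and> finite B \<and> card A = n \<and> card B = n \<and> A \<inter> B = {} \<and>
     (\<forall>S\<in>\<S>. S \<subseteq> A \<union> B \<and> card (S \<inter> A) = k \<and> card (S \<inter> B) = k) \<and>
     (\<forall>S\<in>\<S>. \<forall>T\<in>\<S>. S \<noteq> T \<longrightarrow>
        ((S \<inter> T \<inter> A = {}) \<noteq> (S \<inter> T \<inter> B = {})))"

definition degree :: "'a set set \<Rightarrow> 'a \<Rightarrow> nat" where
  "degree \<S> v = card {S \<in> \<S>. v \<in> S}"

end

theory Submission
  imports Defs
begin

(*
  Two distinct members of a semi-intersecting family cannot share both a vertex of A and a
  vertex of B, so a pair (x, y) in A \<times> B lies in at most one member.  If a \<in> A has degree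
  greater than k, pick k + 1 members through a: they meet any fixed member S in pairwise
  distinct vertices of B, so S meets one of them in A.  Hence the union of their A-parts,
  of size at most 1 + (k + 1)(k - 1) = k\<^sup>2, meets every member.  With such transversals
  X \<subseteq> A and Y \<subseteq> B and any member T, every member meets T in A (and then Y) or in B
  (and then X), so there are at most k \<cdot> k\<^sup>2 + k\<^sup>2 \<cdot> k members.
*)

lemma semi_intersecting_swap:
  "semi_intersecting n k A B \<S> \<Longrightarrow> semi_intersecting n k B A \<S>"
  unfolding semi_intersecting_def by blast

lemma semi_intersecting_finite:
  assumes "semi_intersecting n k A B \<S>"
  shows "finite \<S>"
proof (rule finite_subset)
  show "\<S> \<subseteq> Pow (A \<union> B)" using assms unfolding semi_intersecting_def by blast
  show "finite (Pow (A \<union> B))" using assms unfolding semi_intersecting_def by simp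
qed

lemma semi_intersecting_card_parts:
  assumes "semi_intersecting n k A B \<S>" "S \<in> \<S>"
  shows "card (S \<inter> A) = k" "card (S \<inter> B) = k"
  using assms unfolding semi_intersecting_def by auto

lemma semi_intersecting_meets_A_iff:
  assumes "semi_intersecting n k A B \<S>" "S \<in> \<S>" "T \<in> \<S>" "S \<noteq> T"
  shows "S \<inter> T \<inter> A \<noteq> {} \<longleftrightarrow> S \<inter> T \<inter> B = {}"
  using assms unfolding semi_intersecting_def by blast

lemma semi_intersecting_eq_if_common_vertices:
  assumes "semi_intersecting n k A B \<S>" "S \<in> \<S>" "T \<in> \<S>"
    and "x \<in> S \<inter> T \<inter> A" "y \<in> S \<inter> T \<inter> B"
  shows "S = T"
  using assms semi_intersecting_meets_A_iff by blast

lemma card_members_meeting_both_le: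
  assumes si: "semi_intersecting n k A B \<S>" and "P \<subseteq> A" "Q \<subseteq> B"
  shows "card {S\<in>\<S>. S \<inter> P \<noteq> {} \<and> S \<inter> Q \<noteq> {}} \<le> card P * card Q"
proof -
  have "finite A" "finite B" using si unfolding semi_intersecting_def by auto
  then have fin: "finite \<S>" "finite (P \<times> Q)"
    using semi_intersecting_finite[OF si] assms(2,3) by (auto intro: finite_subset)
  have at_most_one: "card {S\<in>\<S>. x \<in> S \<and> y \<in> S} \<le> 1" if "(x, y) \<in> P \<times> Q" for x y
  proof -
    have "\<forall>S\<in>{S\<in>\<S>. x \<in> S \<and> y \<in> S}. \<forall>T\<in>{S\<in>\<S>. x \<in> S \<and> y \<in> S}. S = T"
      using semi_intersecting_eq_if_common_vertices[OF si] that assms(2,3) by blast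
    then show ?thesis using fin(1) by (simp add: card_le_Suc0_iff_eq)
  qed
  have "{S\<in>\<S>. S \<inter> P \<noteq> {} \<and> S \<inter> Q \<noteq> {}} = (\<Union>(x, y)\<in>P \<times> Q. {S\<in>\<S>. x \<in> S \<and> y \<in> S})"
    by blast
  also have "card \<dots> \<le> (\<Sum>(x, y)\<in>P \<times> Q. card {S\<in>\<S>. x \<in> S \<and> y \<in> S})"
    using card_UN_le[OF fin(2)] by (simp add: case_prod_beta)
  also have "\<dots> \<le> (\<Sum>_\<in>P \<times> Q. 1)"
    by (rule sum_mono) (use at_most_one in auto)
  finally show ?thesis by (simp add: card_cartesian_product)
qed

lemma card_UN_common_point_le:
  assumes "finite I" and "\<And>i. i \<in> I \<Longrightarrow> a \<in> U i \<and> card (U i) = m"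
  shows "card (\<Union>i\<in>I. U i) \<le> 1 + card I * (m - 1)"
proof (cases "I = {}")
  case False
  define V where "V i = U i - {a}" for i
  have "(\<Union>i\<in>I. U i) = insert a (\<Union>i\<in>I. V i)"
    using False assms(2) unfolding V_def by auto
  also have "card \<dots> \<le> 1 + card (\<Union>i\<in>I. V i)"
    by (rule card_insert_le_m1) simp_all
  also have "card (\<Union>i\<in>I. V i) \<le> (\<Sum>i\<in>I. card (V i))"
    by (rule card_UN_le[OF assms(1)])
  also have "\<dots> = card I * (m - 1)"
    using assms(2) unfolding V_def by (simp add: card_Diff_singleton_if)
  finally show ?thesis by simp
qed simp

lemma high_degree_vertex_transversal:
  assumes si: "semi_intersecting n k A B \<S>" and a: "a \<in> A" and deg: "degree \<S> a > k"
  shows "\<exists>X\<subseteq>A. card X \<le> k\<^sup>2 \<and> (\<forall>S\<in>\<S>. S \<inter> X \<noteq> {})"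
proof -
  have finite: "finite \<S>" "finite A"
    using semi_intersecting_finite[OF si] si unfolding semi_intersecting_def by auto
  have "k + 1 \<le> card {S\<in>\<S>. a \<in> S}" using deg unfolding degree_def by simp
  then obtain F where F: "F \<subseteq> {S\<in>\<S>. a \<in> S}" "card F = k + 1"
    by (meson obtain_subset_with_card_n)
  have F_parts: "a \<in> U \<inter> A" "card (U \<inter> A) = k" if "U \<in> F" for U
    using that F(1) a semi_intersecting_card_parts[OF si] by auto
  obtain U0 where "U0 \<in> F" using F(2) by fastforce
  then have "U0 \<inter> A \<noteq> {}" "finite (U0 \<inter> A)" using F_parts finite(2) by auto
  then have "card (U0 \<inter> A) > 0" by (simp add: card_gt_0_iff)
  then have k: "k \<ge> 1" using F_parts[OF \<open>U0 \<in> F\<close>] by simp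
  have meets_F: "\<exists>U\<in>F. S \<inter> U \<inter> A \<noteq> {}" if S: "S \<in> \<S>" for S
  proof (rule ccontr)
    assume "\<not> ?thesis"
    then have disjoint_A: "S \<inter> U \<inter> A = {}" if "U \<in> F" for U using that by blast
    have meets_B: "S \<inter> U \<inter> B \<noteq> {}" if U: "U \<in> F" for U
    proof -
      have "S \<noteq> U" using disjoint_A[OF U] F_parts(1)[OF U] by blast
      then show ?thesis
        using semi_intersecting_meets_A_iff[OF si S] F(1) U disjoint_A[OF U] by blast
    qed
    have "F \<subseteq> {U\<in>\<S>. U \<inter> {a} \<noteq> {} \<and> U \<inter> (S \<inter> B) \<noteq> {}}"
    proof
      fix U assume U: "U \<in> F"
      then show "U \<in> {U\<in>\<S>. U \<inter> {a} \<noteq> {} \<and> U \<inter> (S \<inter> B) \<noteq> {}}"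
        using F(1) F_parts(1)[OF U] meets_B[OF U] by blast
    qed
    then have "card F \<le> card {U\<in>\<S>. U \<inter> {a} \<noteq> {} \<and> U \<inter> (S \<inter> B) \<noteq> {}}"
      by (rule card_mono[rotated]) (simp add: finite(1))
    also have "\<dots> \<le> card {a} * card (S \<inter> B)"
      using a by (intro card_members_meeting_both_le[OF si]) auto
    finally show False using F(2) semi_intersecting_card_parts[OF si S] by simp
  qed
  define X where "X = (\<Union>U\<in>F. U \<inter> A)"
  have "finite F" using F(1) finite(1) by (auto intro: finite_subset)
  then have "card X \<le> 1 + card F * (k - 1)"
    unfolding X_def using F_parts by (intro card_UN_common_point_le) auto
  also have "\<dots> = k\<^sup>2" using F(2) k by (cases k) (auto simp: power2_eq_square)
  finally have "card X \<le> k\<^sup>2" .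
  moreover have "X \<subseteq> A" "\<forall>S\<in>\<S>. S \<inter> X \<noteq> {}" unfolding X_def using meets_F by blast+
  ultimately show ?thesis by blast
qed

lemma card_le_by_transversals:
  assumes si: "semi_intersecting n k A B \<S>" and T: "T \<in> \<S>"
    and X: "X \<subseteq> A" "\<forall>S\<in>\<S>. S \<inter> X \<noteq> {}" and Y: "Y \<subseteq> B" "\<forall>S\<in>\<S>. S \<inter> Y \<noteq> {}"
  shows "card \<S> \<le> card X * k + k * card Y"
proof -
  let ?meet_A = "{S\<in>\<S>. S \<inter> (T \<inter> A) \<noteq> {} \<and> S \<inter> Y \<noteq> {}}"
  let ?meet_B = "{S\<in>\<S>. S \<inter> X \<noteq> {} \<and> S \<inter> (T \<inter> B) \<noteq> {}}"
  have meets_T: "S \<inter> T \<inter> A \<noteq> {} \<or> S \<inter> T \<inter> B \<noteq> {}" if S: "S \<in> \<S>" for S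
  proof (cases "S = T")
    case True
    then show ?thesis using X T by blast
  next
    case False
    then show ?thesis using semi_intersecting_meets_A_iff[OF si S T] by blast
  qed
  have "\<S> \<subseteq> ?meet_A \<union> ?meet_B"
  proof
    fix S assume S: "S \<in> \<S>"
    then show "S \<in> ?meet_A \<union> ?meet_B"
      using meets_T[OF S] X(2) Y(2) by blast
  qed
  then have "card \<S> \<le> card (?meet_A \<union> ?meet_B)"
    by (rule card_mono[rotated]) (simp add: semi_intersecting_finite[OF si])
  also have "\<dots> \<le> card ?meet_A + card ?meet_B" by (rule card_Un_le)
  also have "\<dots> \<le> card (T \<inter> A) * card Y + card X * card (T \<inter> B)"
    using X(1) Y(1) by (intro add_mono card_members_meeting_both_le[OF si]) auto
  finally show ?thesis using semi_intersecting_card_parts[OF si T] by simp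
qed

theorem lemma2p2:
  fixes A B :: "'a set" and \<S> :: "'a set set" and n k :: nat
  assumes "k \<ge> 1"
    and "finite A" and "finite B" and "card A = n" and "card B = n" and "A \<inter> B = {}"
    and "semi_intersecting n k A B \<S>"
    and "card \<S> > 2 * k ^ 3"
  shows "(\<forall>v\<in>A. degree \<S> v \<le> k) \<or> (\<forall>v\<in>B. degree \<S> v \<le> k)"
proof (rule ccontr)
  assume "\<not> ?thesis"
  then obtain a b where a: "a \<in> A" "degree \<S> a > k" and b: "b \<in> B" "degree \<S> b > k"
    by (auto simp: not_le)
  note si = assms(7)
  obtain X where X: "X \<subseteq> A" "card X \<le> k\<^sup>2" "\<forall>S\<in>\<S>. S \<inter> X \<noteq> {}"
    using high_degree_vertex_transversal[OF si a] by blast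
  obtain Y where Y: "Y \<subseteq> B" "card Y \<le> k\<^sup>2" "\<forall>S\<in>\<S>. S \<inter> Y \<noteq> {}"
    using high_degree_vertex_transversal[OF semi_intersecting_swap[OF si] b] by blast
  obtain T where "T \<in> \<S>" using assms(8) by fastforce
  have "card \<S> \<le> card X * k + k * card Y"
    using card_le_by_transversals[OF si \<open>T \<in> \<S>\<close>] X Y by blast
  also have "\<dots> \<le> k\<^sup>2 * k + k * k\<^sup>2" using X(2) Y(2) by (intro add_mono) simp_all
  also have "\<dots> = 2 * k ^ 3" by (simp add: power2_eq_square power3_eq_cube)
  finally show False using assms(8) by simp
qed

end
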